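(* Let $\ell_1,\ell_2$ be two perpendicular lines in the hyperbolic plane crossing at a point $x$, dividing the plane into four quadrants. Then for every point $p$ in one quadrant and every point $q$ in the opposite quadrant, the hyperbolic geodesic segment from $p$ to $q$ passes within hyperbolic distance $\ln(1+\sqrt{2})$ of $x$.
   Context: The hyperbolic plane is the complete simply connected Riemannian surface of constant curvature $-1$; lines are complete geodesics. Two quadrants are opposite if they share only the point $x$. *)

theory Defs
  imports "HOL-Analysis.Analysis"
begin

text \<open>Hyperboloid model of the hyperbolic plane in Minkowski space R^(2,1).\<close>

definition mink :: "real^3 \<Rightarrow> real^3 \<Rightarrow> real" where
  "mink u v = u$1 * v$1 + u$2 * v$2 - u$3 * v$3"

definition hyp :: "(real^3) set" where
  "hyp = {z. mink z z = -1 \<and> z$3 > 0}"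

definition hdist :: "real^3 \<Rightarrow> real^3 \<Rightarrow> real" where
  "hdist p q = arcosh (- mink p q)"

text \<open>Lines (complete geodesics): intersections of hyp with planes through 0
  having spacelike normal n.\<close>
definition hline :: "real^3 \<Rightarrow> (real^3) set" where
  "hline n = {z \<in> hyp. mink z n = 0}"

definition spacelike :: "real^3 \<Rightarrow> bool" where
  "spacelike n \<longleftrightarrow> mink n n > 0"

definition hsegment :: "real^3 \<Rightarrow> real^3 \<Rightarrow> (real^3) set" where
  "hsegment p q = {z \<in> hyp. \<exists>a b. a \<ge> 0 \<and> b \<ge> 0 \<and> z = a *\<^sub>R p + b *\<^sub>R q}"

text \<open>Closed quadrant cut out by lines hline n1, hline n2 on the sides given by the normals;
  the opposite quadrant is quadrant (-n1) (-n2).\<close>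
definition quadrant :: "real^3 \<Rightarrow> real^3 \<Rightarrow> (real^3) set" where
  "quadrant n1 n2 = {z \<in> hyp. mink z n1 \<ge> 0 \<and> mink z n2 \<ge> 0}"

end

theory Submission
  imports Defs
begin

text \<open>By the hyperbolic law of cosines, cosh d(p,q) \<ge> cosh d(p,x) cosh d(q,x) holds exactly
  when the angle of the triangle pxq at x is at least a right angle, and points of opposite
  quadrants see each other from x under such an angle. In an obtuse triangle, if neither p nor q
  lies within arcosh \<surd>2 = ln (1 + \<surd>2) of x, then the point of the segment with homogeneous
  coordinates \<surd>(cosh(d(q,x))^2 - 2) p + \<surd>(cosh(d(p,x))^2 - 2) q does.\<close>

lemma mink_commute: "mink u v = mink v u"
  by (simp add: mink_def algebra_simps)

lemma mink_scaleR_left [simp]: "mink (c *\<^sub>R u) v = c * mink u v"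
  and mink_scaleR_right [simp]: "mink u (c *\<^sub>R v) = c * mink u v"
  and mink_add_left [simp]: "mink (u + v) w = mink u w + mink v w"
  and mink_add_right [simp]: "mink u (v + w) = mink u v + mink u w"
  and mink_minus_left [simp]: "mink (- u) v = - mink u v"
  and mink_minus_right [simp]: "mink u (- v) = - mink u v"
  by (simp_all add: mink_def algebra_simps)

lemma mink_frame_expansion:
  fixes e1 e2 e3 z w :: "real^3"
  assumes "mink e1 e1 = 1" "mink e2 e2 = 1" "mink e3 e3 = -1"
    and "mink e1 e2 = 0" "mink e1 e3 = 0" "mink e2 e3 = 0"
  shows "mink z w = mink z e1 * mink w e1 + mink z e2 * mink w e2 - mink z e3 * mink w e3"
proof -
  define \<eta> :: "3 \<Rightarrow> real" where "\<eta> k = (if k = 3 then -1 else 1)" for k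
  define F :: "real^3^3" where "F = vector [e1, e2, e3]"
  define G :: "real^3^3" where "G = (\<chi> i k. \<eta> i * F$k$i * \<eta> k)"
  have "F ** G = mat 1"
    using assms by (simp add: vec_eq_iff forall_3 matrix_matrix_mult_def sum_3 F_def G_def \<eta>_def
        mat_def mink_def algebra_simps)
  \<comment> \<open>A one-sided inverse of a square matrix is two-sided: orthonormality of the rows of F
    turns into the completeness relation for its columns.\<close>
  then have "G ** F = mat 1"
    by (simp add: matrix_left_right_inverse)
  then have GF: "(G ** F)$i$j = mat 1 $ i $ j" for i j
    by simp
  have complete: "e1$i * e1$j + e2$i * e2$j - e3$i * e3$j = (if i = j then \<eta> i else 0)" for i j
    using GF[of i j] exhaust_3[of i] exhaust_3[of j]
    by (auto simp: matrix_matrix_mult_def sum_3 F_def G_def \<eta>_def mat_def algebra_simps)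
  show ?thesis
    using complete[of 1 1] complete[of 2 2] complete[of 3 3]
      complete[of 1 2] complete[of 1 3] complete[of 2 3]
    unfolding mink_def \<eta>_def by simp algebra
qed

lemma hyp_third_ge_1:
  assumes "z \<in> hyp" shows "1 \<le> z$3"
proof -
  have "z$3^2 = 1 + z$1^2 + z$2^2" "0 < z$3"
    using assms by (auto simp: hyp_def mink_def power2_eq_square)
  then show ?thesis
    using power2_le_imp_le[of 1 "z$3"] by simp
qed

lemma hyp_mink_le:
  assumes z: "z \<in> hyp" and x: "x \<in> hyp"
  shows "mink z x \<le> -1"
proof -
  have zz: "z$1^2 + z$2^2 = z$3^2 - 1" and xx: "x$1^2 + x$2^2 = x$3^2 - 1"
    using z x by (auto simp: hyp_def mink_def power2_eq_square)
  have "(z$1 * x$1 + z$2 * x$2)^2 \<le> (z$1^2 + z$2^2) * (x$1^2 + x$2^2)"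
    using zero_le_power2[of "z$1 * x$2 - z$2 * x$1"] by (simp add: power2_eq_square algebra_simps)
  also have "\<dots> = (z$3^2 - 1) * (x$3^2 - 1)"
    by (simp add: zz xx)
  also have "\<dots> \<le> (z$3 * x$3 - 1)^2"
    using zero_le_power2[of "z$3 - x$3"] by (simp add: power2_eq_square algebra_simps)
  finally have "z$1 * x$1 + z$2 * x$2 \<le> z$3 * x$3 - 1"
  proof (rule power2_le_imp_le)
    show "0 \<le> z$3 * x$3 - 1"
      using mult_mono[of 1 "z$3" 1 "x$3"] hyp_third_ge_1[OF z] hyp_third_ge_1[OF x] by simp
  qed
  then show ?thesis
    by (simp add: mink_def)
qed

lemma arcosh_sqrt2: "arcosh (sqrt 2) = ln (1 + sqrt 2)"
  by (simp add: arcosh_real_def add.commute)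

lemma hdist_le_ln_1_plus_sqrt2:
  assumes "z \<in> hyp" "x \<in> hyp" "- mink z x \<le> sqrt 2"
  shows "hdist z x \<le> ln (1 + sqrt 2)"
proof -
  have "1 \<le> - mink z x"
    using hyp_mink_le[OF assms(1,2)] by simp
  then have "arcosh (- mink z x) \<le> arcosh (sqrt 2)"
    using assms(3) by (simp add: not_less[symmetric])
  then show ?thesis
    by (simp add: hdist_def arcosh_sqrt2)
qed

lemma left_mem_hsegment: "p \<in> hyp \<Longrightarrow> p \<in> hsegment p q"
  unfolding hsegment_def by (intro CollectI conjI exI[of _ 1] exI[of _ 0]) simp_all

lemma right_mem_hsegment: "q \<in> hyp \<Longrightarrow> q \<in> hsegment p q"
  unfolding hsegment_def by (intro CollectI conjI exI[of _ 0] exI[of _ 1]) simp_all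

lemma mink_hyp_combination:
  assumes "p \<in> hyp" "q \<in> hyp"
  shows "- mink (l *\<^sub>R p + m *\<^sub>R q) (l *\<^sub>R p + m *\<^sub>R q) = l^2 + m^2 - 2 * l * m * mink p q"
  using assms by (simp add: hyp_def mink_commute[of q p] power2_eq_square algebra_simps)

lemma normalized_combination_mem_hsegment:
  assumes p: "p \<in> hyp" and q: "q \<in> hyp" and "0 \<le> l" "0 \<le> m" "0 < l + m"
  defines "w \<equiv> l *\<^sub>R p + m *\<^sub>R q"
  shows "0 < - mink w w" and "(1 / sqrt (- mink w w)) *\<^sub>R w \<in> hsegment p q"
proof -
  have "l * m * mink p q \<le> l * m * -1"
    using hyp_mink_le[OF p q] by (rule mult_left_mono) (use assms in simp)
  then have "(l + m)^2 \<le> - mink w w"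
    unfolding w_def mink_hyp_combination[OF p q] by (simp add: power2_sum)
  then show ww: "0 < - mink w w"
    using zero_less_power[OF \<open>0 < l + m\<close>, of 2] by linarith
  define z where "z = (1 / sqrt (- mink w w)) *\<^sub>R w"
  have "l \<le> l * p$3" "m \<le> m * q$3"
    using hyp_third_ge_1[OF p] hyp_third_ge_1[OF q] assms(3,4) by (simp_all add: mult_le_cancel_left1)
  then have "0 < l * p$3 + m * q$3"
    using assms(5) by linarith
  then have "0 < z$3"
    using ww by (simp add: z_def w_def)
  moreover have "mink z z = -1"
    using ww by (simp add: z_def)
  ultimately have "z \<in> hyp"
    by (simp add: hyp_def)
  moreover have "z = (l / sqrt (- mink w w)) *\<^sub>R p + (m / sqrt (- mink w w)) *\<^sub>R q"
    by (simp add: z_def w_def scaleR_add_right)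
  ultimately show "(1 / sqrt (- mink w w)) *\<^sub>R w \<in> hsegment p q"
    using assms(3,4) ww unfolding hsegment_def z_def by (intro CollectI conjI exI) simp_all
qed

lemma obtuse_weights_inequality:
  fixes c d :: real
  assumes "sqrt 2 \<le> c" "sqrt 2 \<le> d"
  defines "l \<equiv> sqrt (d^2 - 2)" and "m \<equiv> sqrt (c^2 - 2)"
  shows "(l * c + m * d)^2 \<le> 2 * (l^2 + m^2 + 2 * l * m * (c * d))"
proof -
  have "0 \<le> c" "0 \<le> d"
    using assms(1,2) real_sqrt_ge_zero[of 2] by linarith+
  have "2 \<le> c^2" "2 \<le> d^2"
    using power_mono[OF assms(1), of 2] power_mono[OF assms(2), of 2] \<open>0 \<le> c\<close> \<open>0 \<le> d\<close> by simp_all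
  then have c2: "c^2 = m^2 + 2" and d2: "d^2 = l^2 + 2" and "0 \<le> l * m"
    by (simp_all add: l_def m_def)
  have "l * m = sqrt ((c^2 - 2) * (d^2 - 2))"
    by (simp add: l_def m_def real_sqrt_mult)
  also have "\<dots> \<le> sqrt ((c * d)^2)"
    using \<open>2 \<le> c^2\<close> \<open>2 \<le> d^2\<close> by (intro real_sqrt_le_mono) (simp add: power_mult_distrib mult_mono)
  also have "\<dots> = c * d"
    using \<open>0 \<le> c\<close> \<open>0 \<le> d\<close> by simp
  finally have "(l * m)^2 \<le> (l * m) * (c * d)"
    using \<open>0 \<le> l * m\<close> unfolding power2_eq_square by (rule mult_left_mono)
  moreover have "(l * c + m * d)^2 = l^2 * c^2 + m^2 * d^2 + 2 * l * m * (c * d)"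
    by (simp add: power2_eq_square algebra_simps)
  moreover have "l^2 * c^2 + m^2 * d^2 = 2 * l^2 + 2 * m^2 + 2 * (l * m)^2"
    unfolding c2 d2 by (simp add: algebra_simps)
  ultimately show ?thesis
    by (simp add: algebra_simps)
qed

lemma obtuse_triangle_hsegment_near_vertex:
  assumes p: "p \<in> hyp" and q: "q \<in> hyp"
    and obtuse: "mink p q \<le> - (mink p x * mink q x)"
  shows "\<exists>z \<in> hsegment p q. - mink z x \<le> sqrt 2"
proof -
  define c d where "c = - mink p x" and "d = - mink q x"
  consider "c \<le> sqrt 2" | "d \<le> sqrt 2" | "sqrt 2 < c" "sqrt 2 < d"
    by linarith
  then show ?thesis
  proof cases
    case 1
    then show ?thesis
      using left_mem_hsegment[OF p] c_def by blast
  next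
    case 2
    then show ?thesis
      using right_mem_hsegment[OF q] d_def by blast
  next
    case 3
    define l m where "l = sqrt (d^2 - 2)" and "m = sqrt (c^2 - 2)"
    define w where "w = l *\<^sub>R p + m *\<^sub>R q"
    define W where "W = - mink w w"
    have "2 < c^2" "2 < d^2"
      using 3 power_strict_mono[of "sqrt 2" _ 2] by auto
    then have "0 < l" "0 < m"
      by (simp_all add: l_def m_def)
    then have "0 < W" and z: "(1 / sqrt W) *\<^sub>R w \<in> hsegment p q"
      using normalized_combination_mem_hsegment[OF p q, of l m] by (simp_all add: W_def w_def)
    have "l * m * (c * d) \<le> l * m * - mink p q"
      using mult_left_mono[OF obtuse, of "l * m"] \<open>0 < l\<close> \<open>0 < m\<close> by (simp add: c_def d_def)
    then have "(l * c + m * d)^2 \<le> 2 * W"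
      using obtuse_weights_inequality[of c d] 3
      unfolding W_def w_def mink_hyp_combination[OF p q] l_def[symmetric] m_def[symmetric] by simp
    then have "l * c + m * d \<le> sqrt 2 * sqrt W"
      by (simp add: real_le_rsqrt flip: real_sqrt_mult)
    moreover have "- mink ((1 / sqrt W) *\<^sub>R w) x = (l * c + m * d) / sqrt W"
      by (simp add: w_def c_def d_def minus_divide_left)
    ultimately have "- mink ((1 / sqrt W) *\<^sub>R w) x \<le> sqrt 2"
      using \<open>0 < W\<close> by (simp add: pos_divide_le_eq)
    with z show ?thesis
      by blast
  qed
qed

lemma opposite_quadrants_obtuse:
  assumes "spacelike n1" "spacelike n2" "mink n1 n2 = 0"
    and "x \<in> hline n1" "x \<in> hline n2"
    and "p \<in> quadrant n1 n2" "q \<in> quadrant (-n1) (-n2)"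
  shows "mink p q \<le> - (mink p x * mink q x)"
proof -
  define e1 e2 where "e1 = (1 / sqrt (mink n1 n1)) *\<^sub>R n1" and "e2 = (1 / sqrt (mink n2 n2)) *\<^sub>R n2"
  have n: "0 < mink n1 n1" "0 < mink n2 n2"
    using assms(1,2) by (simp_all add: spacelike_def)
  have "mink e1 e1 = 1" "mink e2 e2 = 1" "mink e1 e2 = 0"
    using n assms(3) by (simp_all add: e1_def e2_def)
  moreover have "mink x x = -1"
    using assms(4) by (simp add: hline_def hyp_def)
  moreover have "mink e1 x = 0" "mink e2 x = 0"
    using assms(4,5) by (simp_all add: hline_def e1_def e2_def mink_commute[of n1 x] mink_commute[of n2 x])
  ultimately have expand: "mink p q = mink p e1 * mink q e1 + mink p e2 * mink q e2 - mink p x * mink q x"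
    by (intro mink_frame_expansion)
  have "0 \<le> mink p e1" "0 \<le> mink p e2" "mink q e1 \<le> 0" "mink q e2 \<le> 0"
    using assms(6,7) n by (simp_all add: quadrant_def e1_def e2_def divide_nonpos_pos)
  then have "mink p e1 * mink q e1 \<le> 0" "mink p e2 * mink q e2 \<le> 0"
    by (simp_all add: mult_nonneg_nonpos)
  then show ?thesis
    unfolding expand by linarith
qed

theorem lemma9:
  fixes n1 n2 x p q :: "real^3"
  assumes "spacelike n1" and "spacelike n2"
    and "mink n1 n2 = 0"
    and "x \<in> hline n1" and "x \<in> hline n2"
    and "p \<in> quadrant n1 n2" and "q \<in> quadrant (-n1) (-n2)"
  shows "\<exists>z \<in> hsegment p q. hdist z x \<le> ln (1 + sqrt 2)"
proof -
  have hyp: "p \<in> hyp" "q \<in> hyp" "x \<in> hyp"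
    using assms(4,6,7) by (simp_all add: quadrant_def hline_def)
  obtain z where "z \<in> hsegment p q" "- mink z x \<le> sqrt 2"
    using obtuse_triangle_hsegment_near_vertex[OF hyp(1,2) opposite_quadrants_obtuse[OF assms]] by blast
  moreover have "z \<in> hyp"
    using \<open>z \<in> hsegment p q\<close> by (simp add: hsegment_def)
  ultimately show ?thesis
    using hdist_le_ln_1_plus_sqrt2[OF _ hyp(3)] by blast
qed

end
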